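(* Let $(\mathsf{E},\mathcal{F},\mu)$ be a probability space and let $P$ be a $\mu$-invariant Markov kernel on $\mathsf{E}$ such that, for some measurable $\varepsilon:\mathsf{E}\to[0,1]$, $P(x,A)\ge\varepsilon(x)\,\delta_{x}(A)$ for all $(x,A)\in\mathsf{E}\times\mathcal{F}$. Then: (1) for all $(x,A)\in\mathsf{E}\times\mathcal{F}$, $P^{2}(x,A)\ge\varepsilon(x)P(x,A)$; (2) for any $p\in(1,\infty]$, with $1/q=1-1/p$, any $f\in\mathrm{L}_{0}^{2p}(\mu)$ and any $s>0$, \[ \mathcal{E}(P,f)\le s\,\mathcal{E}(P^{2},f)+\mu\big(\varepsilon(X)^{-1}\ge s\big)^{1/q}\,\Phi_{p}(f), \] where $\Phi_{p}(f):=4\|f\|_{2p}^{2}$ if $p\in(1,\infty)$ and $\Phi_{\infty}(f):=\|f\|_{\mathrm{osc}}^{2}$.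
   Context: $\delta_{x}$ is the point mass at $x$; $\varepsilon(x)^{-1}=\infty$ when $\varepsilon(x)=0$. $\mathrm{L}_{0}^{r}(\mu)$ consists of $f$ with $\int|f|^{r}\mathrm{d}\mu<\infty$ and $\mu(f)=0$, $\|f\|_{r}=(\int|f|^{r}\mathrm{d}\mu)^{1/r}$, and $\|f\|_{\mathrm{osc}}:=\operatorname{ess\,sup}_{\mu}f-\operatorname{ess\,inf}_{\mu}f$. For a Markov kernel $T$, $\mathcal{E}(T,f):=\langle(\mathrm{Id}-T)f,f\rangle$ in $\mathrm{L}^{2}(\mu)$. *)

theory Defs
  imports "HOL-Probability.Probability"
begin

definition kop :: "('a \<Rightarrow> 'a measure) \<Rightarrow> ('a \<Rightarrow> real) \<Rightarrow> 'a \<Rightarrow> real" where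
  "kop T f x = (\<integral>y. f y \<partial>(T x))"

definition ksq :: "('a \<Rightarrow> 'a measure) \<Rightarrow> 'a \<Rightarrow> 'a measure" where
  "ksq P x = (P x \<bind> P)"

definition dirichlet :: "'a measure \<Rightarrow> ('a \<Rightarrow> 'a measure) \<Rightarrow> ('a \<Rightarrow> real) \<Rightarrow> real" where
  "dirichlet M T f = (\<integral>x. (f x - kop T f x) * f x \<partial>M)"

definition osc_norm :: "'a measure \<Rightarrow> ('a \<Rightarrow> real) \<Rightarrow> real" where
  "osc_norm M f = real_of_ereal (esssup M (\<lambda>x. ereal (f x)) - (- esssup M (\<lambda>x. ereal (- f x))))"

definition lr_norm :: "'a measure \<Rightarrow> real \<Rightarrow> ('a \<Rightarrow> real) \<Rightarrow> real" where
  "lr_norm M r f = (\<integral>x. \<bar>f x\<bar> powr r \<partial>M) powr (1 / r)"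

end

theory Submission
  imports Defs
begin

(* Write e_T(x) = int (f y - f x)^2 T(x, dy).  For a mu-invariant kernel T and f in L^2(mu),
   int e_T d mu = 2 E(T, f).  Testing the minorization P(x, .) >= eps(x) delta_x against
   z |-> int G dP(z) gives P^2(x, .) >= eps(x) P(x, .), so e_P <= s eps e_P <= s e_{P^2} off the
   set B = {eps^-1 >= s}.  On B, e_P(x) <= 2 P(f^2)(x) + 2 f(x)^2, and each term integrates over B
   to at most ||f||_{2p}^2 mu(B)^{1/q} by Hoelder's inequality for the coupling mu(dx) P(x, dy),
   obtained from the tangent-line bound for t |-> t^p by optimising over the point of tangency;
   in the bounded case simply e_P <= ||f||_osc^2 almost everywhere. *)

lemma le_powr_tangent:
  fixes p a c :: real
  assumes p: "1 < p" and a: "0 \<le> a" and c: "0 < c"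
  shows "a \<le> a powr p / (p * c powr (p - 1)) + (1 - 1 / p) * c"
proof (cases "a = 0")
  case True
  then show ?thesis using p c by simp
next
  case False
  with a have a: "0 < a" by simp
  define u where "u = a powr p / c powr (p - 1)"
  have u: "0 < u" using a c by (simp add: u_def)
  have "a = u powr (1 / p) * c powr (1 - 1 / p)"
  proof -
    have "u powr (1 / p) = a / c powr ((p - 1) / p)"
      using a c p by (simp add: u_def powr_divide powr_powr)
    moreover have "(p - 1) / p = 1 - 1 / p" using p by (simp add: field_simps)
    ultimately show ?thesis using c by simp
  qed
  also have "\<dots> \<le> (1 / p) * u + (1 - 1 / p) * c"
    using p u c by (intro Youngs_inequality_0) auto
  finally show ?thesis by (simp add: u_def)
qed

lemma power2_le_powr_tangent:
  fixes p c u :: real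
  assumes p: "1 < p" and c: "0 < c"
  shows "u\<^sup>2 \<le> \<bar>u\<bar> powr (2 * p) / (p * c powr (p - 1)) + (1 - 1 / p) * c"
proof -
  have "(u\<^sup>2) powr p = (\<bar>u\<bar> powr 2) powr p" by simp
  also have "\<dots> = \<bar>u\<bar> powr (2 * p)" by (rule powr_powr)
  finally show ?thesis
    using le_powr_tangent[OF p _ c, of "u\<^sup>2"] by simp
qed

lemma le_powr_mult_powr_if_tangent_bounds:
  fixes p K m X :: real
  assumes p: "1 < p" and K: "0 \<le> K" and m: "0 < m"
    and bound: "\<And>c. 0 < c \<Longrightarrow> X \<le> K / (p * c powr (p - 1)) + (1 - 1 / p) * c * m"
  shows "X \<le> K powr (1 / p) * m powr (1 - 1 / p)"
proof (cases "K = 0")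
  case True
  have "X \<le> 0 + e" if e: "0 < e" for e
  proof -
    have "X \<le> (1 - 1 / p) * e" using bound[of "e / m"] True e m by simp
    also have "\<dots> \<le> e" using p e by (simp add: mult_le_cancel_right1)
    finally show ?thesis by simp
  qed
  then have "X \<le> 0" by (rule field_le_epsilon)
  then show ?thesis using True by simp
next
  case False
  with K have K: "0 < K" by simp
  define c where "c = (K / m) powr (1 / p)"
  have c: "0 < c" using K m by (simp add: c_def)
  have split_powr: "x = x powr (1 / p) * x powr (1 - 1 / p)" if "0 < x" for x :: real
    using that by (simp add: powr_add[symmetric])
  have "c powr (p - 1) = (K / m) powr (1 / p * (p - 1))"
    unfolding c_def by (rule powr_powr)
  also have "1 / p * (p - 1) = 1 - 1 / p" using p by (simp add: field_simps)
  finally have "K / (p * c powr (p - 1)) = K / (p * (K / m) powr (1 - 1 / p))" by simp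
  also have "\<dots> = c * m / p"
  proof -
    have "K / m = c * (K / m) powr (1 - 1 / p)"
      unfolding c_def using K m by (intro split_powr) simp
    then show ?thesis using K m p by (simp add: field_simps)
  qed
  finally have "K / (p * c powr (p - 1)) + (1 - 1 / p) * c * m = c * m"
    using p by (simp add: field_simps)
  also have "c * m = K powr (1 / p) * m powr (1 - 1 / p)"
    using split_powr[OF m] K m by (simp add: c_def powr_divide field_simps)
  finally show ?thesis using bound[OF c] by simp
qed

lemma power2_diff_le: "((u::real) - v)\<^sup>2 \<le> 2 * u\<^sup>2 + 2 * v\<^sup>2"
proof -
  have "0 \<le> (u + v)\<^sup>2" by simp
  then show ?thesis by (simp add: power2_diff power2_sum)
qed

lemma lr_norm_power2:
  "(lr_norm M (2 * p) f)\<^sup>2 = (\<integral>x. \<bar>f x\<bar> powr (2 * p) \<partial>M) powr (1 / p)"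
proof -
  have "(lr_norm M (2 * p) f)\<^sup>2
      = (\<integral>x. \<bar>f x\<bar> powr (2 * p) \<partial>M) powr (1 / (2 * p) + 1 / (2 * p))"
    unfolding lr_norm_def power2_eq_square by (rule powr_add[symmetric])
  also have "1 / (2 * p) + 1 / (2 * p) = 1 / p"
    by simp
  finally show ?thesis .
qed

lemma (in prob_space) integral_power2_diff_const:
  fixes f :: "'a \<Rightarrow> real"
  assumes f: "integrable M f" and f2: "integrable M (\<lambda>y. (f y)\<^sup>2)"
  shows "integrable M (\<lambda>y. (f y - c)\<^sup>2)"
    and "(\<integral>y. (f y - c)\<^sup>2 \<partial>M) = (\<integral>y. (f y)\<^sup>2 \<partial>M) - 2 * c * (\<integral>y. f y \<partial>M) + c\<^sup>2"
proof -
  have expand: "(\<lambda>y. (f y - c)\<^sup>2) = (\<lambda>y. (f y)\<^sup>2 - 2 * c * f y + c\<^sup>2)"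
    by (simp add: power2_diff algebra_simps)
  show "integrable M (\<lambda>y. (f y - c)\<^sup>2)"
    unfolding expand using f f2 by simp
  show "(\<integral>y. (f y - c)\<^sup>2 \<partial>M) = (\<integral>y. (f y)\<^sup>2 \<partial>M) - 2 * c * (\<integral>y. f y \<partial>M) + c\<^sup>2"
    unfolding expand using f f2 by (simp add: prob_space)
qed

lemma (in finite_measure) integrable_power2_if_integrable_powr:
  fixes f :: "'a \<Rightarrow> real"
  assumes f[measurable]: "f \<in> borel_measurable M" and r: "2 \<le> r"
    and f_r: "integrable M (\<lambda>x. \<bar>f x\<bar> powr r)"
  shows "integrable M (\<lambda>x. (f x)\<^sup>2)"
proof (rule Bochner_Integration.integrable_bound)
  show "integrable M (\<lambda>x. 1 + \<bar>f x\<bar> powr r)"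
    using f_r by simp
  show "AE x in M. norm ((f x)\<^sup>2) \<le> norm (1 + \<bar>f x\<bar> powr r)"
  proof (intro AE_I2)
    fix x
    have "(f x)\<^sup>2 \<le> 1 + \<bar>f x\<bar> powr r"
    proof (cases "\<bar>f x\<bar> \<le> 1")
      case True
      then have "(f x)\<^sup>2 \<le> 1" by (simp add: abs_square_le_1)
      then show ?thesis by (simp add: add_increasing2)
    next
      case False
      then have "\<bar>f x\<bar> powr 2 \<le> \<bar>f x\<bar> powr r" using r by (intro powr_mono) auto
      then show ?thesis by simp
    qed
    then show "norm ((f x)\<^sup>2) \<le> norm (1 + \<bar>f x\<bar> powr r)" by simp
  qed
qed measurable

lemma (in prob_space) bind_eq_if_invariant:
  assumes kernel: "T \<in> M \<rightarrow>\<^sub>M prob_algebra M"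
    and invariant: "\<forall>A\<in>sets M. (\<integral>x. measure (T x) A \<partial>M) = measure M A"
  shows "M \<bind> T = M"
proof (rule measure_eqI)
  have T_prob: "T x \<in> space (prob_algebra M)" if "x \<in> space M" for x
    using kernel that by (rule measurable_space)
  then show sets: "sets (M \<bind> T) = sets M"
    by (intro sets_bind not_empty) (auto simp: space_prob_algebra)
  fix A assume "A \<in> sets (M \<bind> T)"
  then have A: "A \<in> sets M" using sets by simp
  have "emeasure (M \<bind> T) A = (\<integral>\<^sup>+x. emeasure (T x) A \<partial>M)"
    using A by (rule emeasure_bind[OF not_empty measurable_prob_algebraD[OF kernel]])
  also have "\<dots> = (\<integral>\<^sup>+x. ennreal (measure (T x) A) \<partial>M)"
    using T_prob by (intro nn_integral_cong)
      (simp add: space_prob_algebra prob_space_def finite_measure.emeasure_eq_measure)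
  also have "\<dots> = ennreal (\<integral>x. measure (T x) A \<partial>M)"
  proof (intro nn_integral_eq_integral integrable_const_bound[where B=1] AE_I2)
    show "(\<lambda>x. measure (T x) A) \<in> borel_measurable M"
      using measurable_compose[OF kernel measurable_measure_prob_algebra[OF A]] .
    show "norm (measure (T x) A) \<le> 1" if "x \<in> space M" for x
      using T_prob[OF that] by (simp add: space_prob_algebra prob_space.prob_le_1)
  qed simp
  also have "\<dots> = emeasure M A"
    using invariant A by (simp add: emeasure_eq_measure)
  finally show "emeasure (M \<bind> T) A = emeasure M A" .
qed

lemma (in prob_space) AE_in_osc_interval:
  fixes f :: "'a \<Rightarrow> real"
  assumes f[measurable]: "f \<in> borel_measurable M" and bounded: "AE x in M. \<bar>f x\<bar> \<le> C"
  shows "\<exists>a. AE x in M. a \<le> f x \<and> f x \<le> a + osc_norm M f"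
proof -
  have esssup_real: "\<exists>r. esssup M (\<lambda>x. ereal (g x)) = ereal r \<and> (AE x in M. g x \<le> r)"
    if [measurable]: "g \<in> borel_measurable M" and g_le: "AE x in M. g x \<le> C" for g :: "'a \<Rightarrow> real"
  proof -
    have below: "AE x in M. ereal (g x) \<le> esssup M (\<lambda>x. ereal (g x))"
      by (rule esssup_AE)
    have "esssup M (\<lambda>x. ereal (g x)) \<le> ereal C"
      using g_le by (intro esssup_I) auto
    moreover have "esssup M (\<lambda>x. ereal (g x)) \<noteq> -\<infinity>"
    proof
      assume "esssup M (\<lambda>x. ereal (g x)) = -\<infinity>"
      with below have "AE x in M. False" by simp
      then show False by (simp add: AE_False)
    qed
    ultimately obtain r where r: "esssup M (\<lambda>x. ereal (g x)) = ereal r"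
      by (cases "esssup M (\<lambda>x. ereal (g x))") auto
    with below show ?thesis by auto
  qed
  have "AE x in M. f x \<le> C" "AE x in M. - f x \<le> C"
    using bounded by (eventually_elim, simp)+
  then obtain a b where
    a: "esssup M (\<lambda>x. ereal (f x)) = ereal a" "AE x in M. f x \<le> a" and
    b: "esssup M (\<lambda>x. ereal (- f x)) = ereal b" "AE x in M. - f x \<le> b"
    using esssup_real[of f] esssup_real[of "\<lambda>x. - f x"] by auto
  have "osc_norm M f = a + b"
    by (simp add: osc_norm_def a b)
  with a b have "AE x in M. - b \<le> f x \<and> f x \<le> - b + osc_norm M f"
    by (auto elim: AE_mp)
  then show ?thesis ..
qed

lemma nn_integral_ge_point_minorant:
  fixes G :: "'a \<Rightarrow> ennreal"
  assumes N: "finite_measure N" "sets N = sets M" and x: "x \<in> space M"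
    and minorant: "\<forall>A\<in>sets M. e * indicator A x \<le> measure N A"
    and G[measurable]: "G \<in> borel_measurable M"
  shows "ennreal e * G x \<le> (\<integral>\<^sup>+y. G y \<partial>N)"
proof -
  define A where "A = {y\<in>space M. G x \<le> G y}"
  have A: "A \<in> sets M" unfolding A_def by measurable
  have "x \<in> A" using x by (simp add: A_def)
  then have "e \<le> measure N A"
    using minorant A by auto
  then have "ennreal e \<le> emeasure N A"
    using N by (simp add: finite_measure.emeasure_eq_measure)
  then have "ennreal e * G x \<le> G x * emeasure N A"
    by (subst mult.commute) (rule mult_left_mono, auto)
  also have "\<dots> = (\<integral>\<^sup>+y. G x * indicator A y \<partial>N)"
    using A N by (simp add: nn_integral_cmult_indicator)
  also have "\<dots> \<le> (\<integral>\<^sup>+y. G y \<partial>N)"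
    by (intro nn_integral_mono) (auto simp: A_def split: split_indicator)
  finally show ?thesis .
qed

definition energy_density :: "('a \<Rightarrow> 'a measure) \<Rightarrow> ('a \<Rightarrow> real) \<Rightarrow> 'a \<Rightarrow> ennreal" where
  "energy_density T f x = (\<integral>\<^sup>+y. ennreal ((f y - f x)\<^sup>2) \<partial>T x)"

locale invariant_kernel = prob_space M for M :: "'a measure" +
  fixes T :: "'a \<Rightarrow> 'a measure"
  assumes kernel: "T \<in> M \<rightarrow>\<^sub>M prob_algebra M"
    and bind_invariant: "M \<bind> T = M"
begin

lemma subprob_kernel: "T \<in> M \<rightarrow>\<^sub>M subprob_algebra M"
  using kernel by (rule measurable_prob_algebraD)

lemma prob_space_kernel: "x \<in> space M \<Longrightarrow> prob_space (T x)"
  using measurable_space[OF kernel] by (simp add: space_prob_algebra)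

lemma sets_kernel: "x \<in> space M \<Longrightarrow> sets (T x) = sets M"
  using measurable_space[OF kernel] by (simp add: space_prob_algebra)

lemma measurable_kernelI: "x \<in> space M \<Longrightarrow> f \<in> M \<rightarrow>\<^sub>M N \<Longrightarrow> f \<in> T x \<rightarrow>\<^sub>M N"
  using measurable_cong_sets[OF sets_kernel refl] by blast

lemma nn_integral_kernel_invariant:
  "g \<in> borel_measurable M \<Longrightarrow> (\<integral>\<^sup>+x. \<integral>\<^sup>+y. g y \<partial>T x \<partial>M) = (\<integral>\<^sup>+x. g x \<partial>M)"
  using nn_integral_bind[OF _ subprob_kernel, of g] bind_invariant by simp

lemma AE_kernel_invariant:
  "Measurable.pred M Q \<Longrightarrow> AE x in M. Q x \<Longrightarrow> AE x in M. AE y in T x. Q y"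
proof -
  assume Q: "Measurable.pred M Q" and "AE x in M. Q x"
  then have "AE x in M \<bind> T. Q x" by (simp only: bind_invariant)
  then show ?thesis by (simp only: AE_bind[OF subprob_kernel Q])
qed

lemma measurable_nn_integral_kernel:
  "g \<in> borel_measurable M \<Longrightarrow> (\<lambda>x. \<integral>\<^sup>+y. g y \<partial>T x) \<in> borel_measurable M"
  by (rule measurable_compose[OF subprob_kernel nn_integral_measurable_subprob_algebra])

lemma measurable_kop: "g \<in> borel_measurable M \<Longrightarrow> kop T g \<in> borel_measurable M"
  unfolding kop_def by (rule measurable_compose[OF subprob_kernel integral_measurable_subprob_algebra])

lemma measurable_energy_density:
  assumes [measurable]: "f \<in> borel_measurable M"
  shows "energy_density T f \<in> borel_measurable M"
  unfolding energy_density_def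
  by (rule nn_integral_measurable_subprob_algebra2[OF _ subprob_kernel]) measurable

lemma AE_integrable_kernel:
  fixes f :: "'a \<Rightarrow> real"
  assumes f[measurable]: "f \<in> borel_measurable M" and f2: "integrable M (\<lambda>x. (f x)\<^sup>2)"
  shows "AE x in M. integrable (T x) (\<lambda>y. (f y)\<^sup>2) \<and> integrable (T x) f"
proof -
  have "(\<integral>\<^sup>+x. \<integral>\<^sup>+y. ennreal ((f y)\<^sup>2) \<partial>T x \<partial>M) = (\<integral>\<^sup>+x. ennreal ((f x)\<^sup>2) \<partial>M)"
    by (rule nn_integral_kernel_invariant) measurable
  also have "\<dots> < \<infinity>"
    using f2 by (simp add: nn_integral_eq_integral)
  finally have "AE x in M. (\<integral>\<^sup>+y. ennreal ((f y)\<^sup>2) \<partial>T x) \<noteq> \<infinity>"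
    by (intro nn_integral_PInf_AE measurable_nn_integral_kernel) auto
  then show ?thesis
  proof (rule AE_mp, intro AE_I2 impI)
    fix x assume x: "x \<in> space M" and fin: "(\<integral>\<^sup>+y. ennreal ((f y)\<^sup>2) \<partial>T x) \<noteq> \<infinity>"
    interpret Tx: prob_space "T x" using x by (rule prob_space_kernel)
    have [measurable]: "f \<in> borel_measurable (T x)" using x f by (rule measurable_kernelI)
    have "integrable (T x) (\<lambda>y. (f y)\<^sup>2)"
    proof (rule integrableI_nonneg)
      show "(\<integral>\<^sup>+y. ennreal ((f y)\<^sup>2) \<partial>T x) < \<infinity>"
        using fin by (simp add: less_top)
    qed auto
    moreover have "integrable (T x) f"
      using calculation by (rule Tx.square_integrable_imp_integrable[rotated]) measurable
    ultimately show "integrable (T x) (\<lambda>y. (f y)\<^sup>2) \<and> integrable (T x) f" ..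
  qed
qed

lemma integrable_kop_nonneg:
  assumes g[measurable]: "g \<in> borel_measurable M" and g_nonneg: "\<And>x. 0 \<le> g x"
    and g_integrable: "integrable M g"
  shows "integrable M (kop T g)" and "(\<integral>x. kop T g x \<partial>M) = (\<integral>x. g x \<partial>M)"
proof -
  have kop_eq: "kop T g x = enn2real (\<integral>\<^sup>+y. ennreal (g y) \<partial>T x)" if "x \<in> space M" for x
    unfolding kop_def using that g_nonneg
    by (intro integral_eq_nn_integral measurable_kernelI g AE_I2) auto
  have "(\<integral>\<^sup>+x. \<integral>\<^sup>+y. ennreal (g y) \<partial>T x \<partial>M) = (\<integral>\<^sup>+x. ennreal (g x) \<partial>M)"
    by (rule nn_integral_kernel_invariant) measurable
  also have "\<dots> = ennreal (\<integral>x. g x \<partial>M)"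
    using g_integrable g_nonneg by (intro nn_integral_eq_integral) auto
  finally have invariant:
    "(\<integral>\<^sup>+x. \<integral>\<^sup>+y. ennreal (g y) \<partial>T x \<partial>M) = ennreal (\<integral>x. g x \<partial>M)" .
  then have "AE x in M. (\<integral>\<^sup>+y. ennreal (g y) \<partial>T x) \<noteq> \<infinity>"
    by (intro nn_integral_PInf_AE measurable_nn_integral_kernel) auto
  with AE_space have "AE x in M. ennreal (kop T g x) = (\<integral>\<^sup>+y. ennreal (g y) \<partial>T x)"
    by eventually_elim (simp add: kop_eq less_top)
  then have "(\<integral>\<^sup>+x. ennreal (kop T g x) \<partial>M)
      = (\<integral>\<^sup>+x. \<integral>\<^sup>+y. ennreal (g y) \<partial>T x \<partial>M)"
    by (rule nn_integral_cong_AE)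
  with invariant have "integrable M (kop T g) \<and> (\<integral>x. kop T g x \<partial>M) = (\<integral>x. g x \<partial>M)"
    using g_nonneg
    by (subst nn_integral_eq_integrable[symmetric])
      (auto intro!: measurable_kop AE_I2 integral_nonneg_AE simp: kop_def)
  then show "integrable M (kop T g)" and "(\<integral>x. kop T g x \<partial>M) = (\<integral>x. g x \<partial>M)"
    by auto
qed

lemma AE_kop_power2_le:
  fixes f :: "'a \<Rightarrow> real"
  assumes f: "f \<in> borel_measurable M" and f2: "integrable M (\<lambda>x. (f x)\<^sup>2)"
  shows "AE x in M. (kop T f x)\<^sup>2 \<le> kop T (\<lambda>y. (f y)\<^sup>2) x"
  using AE_integrable_kernel[OF f f2]
proof (rule AE_mp, intro AE_I2 impI)
  fix x assume "x \<in> space M" and "integrable (T x) (\<lambda>y. (f y)\<^sup>2) \<and> integrable (T x) f"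
  then interpret Tx: prob_space "T x" by (auto intro: prob_space_kernel)
  have "0 \<le> (\<integral>y. (f y - kop T f x)\<^sup>2 \<partial>T x)"
    by (intro integral_nonneg_AE) auto
  also have "\<dots> = kop T (\<lambda>y. (f y)\<^sup>2) x - (kop T f x)\<^sup>2"
    using \<open>integrable (T x) _ \<and> _\<close>
    by (simp add: Tx.integral_power2_diff_const kop_def) (simp add: power2_eq_square)
  finally show "(kop T f x)\<^sup>2 \<le> kop T (\<lambda>y. (f y)\<^sup>2) x" by simp
qed

lemma AE_energy_density_eq:
  fixes f :: "'a \<Rightarrow> real"
  assumes f: "f \<in> borel_measurable M" and f2: "integrable M (\<lambda>x. (f x)\<^sup>2)"
  shows "AE x in M. energy_density T f x
    = ennreal (kop T (\<lambda>y. (f y)\<^sup>2) x - 2 * f x * kop T f x + (f x)\<^sup>2)"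
  using AE_integrable_kernel[OF f f2]
proof (rule AE_mp, intro AE_I2 impI)
  fix x assume "x \<in> space M"
    and Tx_integrable: "integrable (T x) (\<lambda>y. (f y)\<^sup>2) \<and> integrable (T x) f"
  then interpret Tx: prob_space "T x" by (auto intro: prob_space_kernel)
  have "energy_density T f x = ennreal (\<integral>y. (f y - f x)\<^sup>2 \<partial>T x)"
    unfolding energy_density_def using Tx_integrable
    by (intro nn_integral_eq_integral) (auto intro: Tx.integral_power2_diff_const)
  then show "energy_density T f x
      = ennreal (kop T (\<lambda>y. (f y)\<^sup>2) x - 2 * f x * kop T f x + (f x)\<^sup>2)"
    using Tx_integrable by (simp add: Tx.integral_power2_diff_const kop_def)
qed

lemma integrable_mult_kop:
  fixes f :: "'a \<Rightarrow> real"
  assumes f[measurable]: "f \<in> borel_measurable M" and f2: "integrable M (\<lambda>x. (f x)\<^sup>2)"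
  shows "integrable M (\<lambda>x. f x * kop T f x)"
proof (rule Bochner_Integration.integrable_bound)
  show "integrable M (\<lambda>x. (f x)\<^sup>2 + kop T (\<lambda>y. (f y)\<^sup>2) x)"
    using f2 by (intro Bochner_Integration.integrable_add integrable_kop_nonneg) auto
  show "(\<lambda>x. f x * kop T f x) \<in> borel_measurable M"
    using measurable_kop[OF f] by measurable
  show "AE x in M. norm (f x * kop T f x) \<le> norm ((f x)\<^sup>2 + kop T (\<lambda>y. (f y)\<^sup>2) x)"
    using AE_kop_power2_le[OF f f2]
  proof eventually_elim
    case (elim x)
    have "2 * \<bar>f x * kop T f x\<bar> \<le> (f x)\<^sup>2 + (kop T f x)\<^sup>2"
      using sum_squares_bound[of "\<bar>f x\<bar>" "\<bar>kop T f x\<bar>"] by (simp add: abs_mult)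
    then have "\<bar>f x * kop T f x\<bar> \<le> (f x)\<^sup>2 + (kop T f x)\<^sup>2" by simp
    with elim show ?case by simp
  qed
qed

lemma nn_integral_energy_density:
  fixes f :: "'a \<Rightarrow> real"
  assumes f[measurable]: "f \<in> borel_measurable M" and f2: "integrable M (\<lambda>x. (f x)\<^sup>2)"
  shows "(\<integral>\<^sup>+x. energy_density T f x \<partial>M) = ennreal (2 * dirichlet M T f)"
    and "0 \<le> dirichlet M T f"
proof -
  define Q where "Q x = kop T (\<lambda>y. (f y)\<^sup>2) x - 2 * f x * kop T f x + (f x)\<^sup>2" for x
  have Tf2: "integrable M (kop T (\<lambda>y. (f y)\<^sup>2))"
    "(\<integral>x. kop T (\<lambda>y. (f y)\<^sup>2) x \<partial>M) = (\<integral>x. (f x)\<^sup>2 \<partial>M)"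
    using f2 by (auto intro: integrable_kop_nonneg)
  note fTf = integrable_mult_kop[OF f f2]
  have Q_integrable: "integrable M Q"
    unfolding Q_def mult.assoc using Tf2 fTf f2 by simp
  have "(\<integral>x. Q x \<partial>M) = 2 * (\<integral>x. (f x)\<^sup>2 \<partial>M) - 2 * (\<integral>x. f x * kop T f x \<partial>M)"
    unfolding Q_def mult.assoc using Tf2 fTf f2 by simp
  also have "\<dots> = 2 * dirichlet M T f"
  proof -
    have "dirichlet M T f = (\<integral>x. (f x)\<^sup>2 - f x * kop T f x \<partial>M)"
      unfolding dirichlet_def by (simp add: power2_eq_square algebra_simps)
    then show ?thesis using fTf f2 by simp
  qed
  finally have Q_integral: "(\<integral>x. Q x \<partial>M) = 2 * dirichlet M T f" .
  have Q_nonneg: "AE x in M. 0 \<le> Q x"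
    using AE_kop_power2_le[OF f f2]
  proof eventually_elim
    case (elim x)
    have "0 \<le> (kop T f x - f x)\<^sup>2" by simp
    with elim show ?case unfolding Q_def power2_diff by (simp add: algebra_simps)
  qed
  have "(\<integral>\<^sup>+x. energy_density T f x \<partial>M) = (\<integral>\<^sup>+x. ennreal (Q x) \<partial>M)"
    using AE_energy_density_eq[OF f f2] unfolding Q_def by (rule nn_integral_cong_AE)
  also have "\<dots> = ennreal (2 * dirichlet M T f)"
    using Q_integrable Q_nonneg Q_integral by (simp add: nn_integral_eq_integral)
  finally show "(\<integral>\<^sup>+x. energy_density T f x \<partial>M) = ennreal (2 * dirichlet M T f)" .
  show "0 \<le> dirichlet M T f"
    using integral_nonneg_AE[OF Q_nonneg] Q_integral by simp
qed

lemma nn_integral_kernel_square_on_le_tangent: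
  fixes f :: "'a \<Rightarrow> real" and p c :: real
  assumes p: "1 < p" and c: "0 < c" and f[measurable]: "f \<in> borel_measurable M"
    and f_p: "integrable M (\<lambda>x. \<bar>f x\<bar> powr (2 * p))" and B[measurable]: "B \<in> sets M"
  shows "(\<integral>\<^sup>+x. (\<integral>\<^sup>+y. ennreal ((f y)\<^sup>2) \<partial>T x) * indicator B x \<partial>M)
    \<le> ennreal ((\<integral>x. \<bar>f x\<bar> powr (2 * p) \<partial>M) / (p * c powr (p - 1)) + (1 - 1 / p) * c * measure M B)"
proof -
  define a where "a = 1 / (p * c powr (p - 1))"
  define b where "b = (1 - 1 / p) * c"
  have a: "0 \<le> a" and b: "0 \<le> b" using p c by (simp_all add: a_def b_def)
  have tangent: "(f y)\<^sup>2 \<le> a * \<bar>f y\<bar> powr (2 * p) + b" for y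
    using power2_le_powr_tangent[OF p c, of "f y"] by (simp add: a_def b_def)
  have "(\<integral>\<^sup>+x. (\<integral>\<^sup>+y. ennreal ((f y)\<^sup>2) \<partial>T x) * indicator B x \<partial>M)
      \<le> (\<integral>\<^sup>+x. ennreal a * (\<integral>\<^sup>+y. ennreal (\<bar>f y\<bar> powr (2 * p)) \<partial>T x)
        + ennreal b * indicator B x \<partial>M)"
  proof (intro nn_integral_mono)
    fix x assume x: "x \<in> space M"
    interpret Tx: prob_space "T x" using x by (rule prob_space_kernel)
    have [measurable]: "f \<in> borel_measurable (T x)" using x f by (rule measurable_kernelI)
    show "(\<integral>\<^sup>+y. ennreal ((f y)\<^sup>2) \<partial>T x) * indicator B x
        \<le> ennreal a * (\<integral>\<^sup>+y. ennreal (\<bar>f y\<bar> powr (2 * p)) \<partial>T x) + ennreal b * indicator B x"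
    proof (cases "x \<in> B")
      case True
      have "(\<integral>\<^sup>+y. ennreal ((f y)\<^sup>2) \<partial>T x)
          \<le> (\<integral>\<^sup>+y. ennreal a * ennreal (\<bar>f y\<bar> powr (2 * p)) + ennreal b \<partial>T x)"
      proof (rule nn_integral_mono)
        fix y
        have "ennreal ((f y)\<^sup>2) \<le> ennreal (a * \<bar>f y\<bar> powr (2 * p) + b)"
          using tangent by (rule ennreal_leI)
        then show "ennreal ((f y)\<^sup>2) \<le> ennreal a * ennreal (\<bar>f y\<bar> powr (2 * p)) + ennreal b"
          using a b by (simp add: ennreal_mult)
      qed
      also have "\<dots> = ennreal a * (\<integral>\<^sup>+y. ennreal (\<bar>f y\<bar> powr (2 * p)) \<partial>T x) + ennreal b"
        by (simp add: nn_integral_add nn_integral_cmult Tx.emeasure_space_1)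
      finally show ?thesis using True by simp
    qed simp
  qed
  also have "\<dots> = ennreal a * (\<integral>\<^sup>+x. ennreal (\<bar>f x\<bar> powr (2 * p)) \<partial>M) + ennreal b * emeasure M B"
  proof -
    have [measurable]: "(\<lambda>x. \<integral>\<^sup>+y. ennreal (\<bar>f y\<bar> powr (2 * p)) \<partial>T x) \<in> borel_measurable M"
      by (rule measurable_nn_integral_kernel) measurable
    show ?thesis
      by (simp add: nn_integral_add nn_integral_cmult nn_integral_kernel_invariant)
  qed
  also have "\<dots> = ennreal (a * (\<integral>x. \<bar>f x\<bar> powr (2 * p) \<partial>M) + b * measure M B)"
    using f_p a b by (simp add: nn_integral_eq_integral emeasure_eq_measure ennreal_mult ennreal_plus)
  finally show ?thesis by (simp add: a_def b_def mult.assoc)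
qed

lemma nn_integral_kernel_square_on_le:
  fixes f :: "'a \<Rightarrow> real" and p :: real
  assumes p: "1 < p" and f[measurable]: "f \<in> borel_measurable M"
    and f_p: "integrable M (\<lambda>x. \<bar>f x\<bar> powr (2 * p))" and B[measurable]: "B \<in> sets M"
  shows "(\<integral>\<^sup>+x. (\<integral>\<^sup>+y. ennreal ((f y)\<^sup>2) \<partial>T x) * indicator B x \<partial>M)
    \<le> ennreal ((lr_norm M (2 * p) f)\<^sup>2 * measure M B powr (1 - 1 / p))"
    (is "?I \<le> _")
proof -
  define K where "K = (\<integral>x. \<bar>f x\<bar> powr (2 * p) \<partial>M)"
  have K: "0 \<le> K" unfolding K_def by (intro integral_nonneg_AE) auto
  have norm: "(lr_norm M (2 * p) f)\<^sup>2 = K powr (1 / p)"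
    unfolding K_def by (rule lr_norm_power2)
  show ?thesis
  proof (cases "measure M B = 0")
    case True
    then have "AE x in M. x \<notin> B"
      by (intro AE_not_in) (simp add: null_sets_def emeasure_eq_measure)
    then have "?I = (\<integral>\<^sup>+x. 0 \<partial>M)"
      by (intro nn_integral_cong_AE) auto
    then show ?thesis by simp
  next
    case False
    then have m: "0 < measure M B" by (simp add: zero_less_measure_iff)
    have tangent: "?I \<le> ennreal (K / (p * c powr (p - 1)) + (1 - 1 / p) * c * measure M B)"
      if "0 < c" for c
      unfolding K_def using p that f f_p B by (rule nn_integral_kernel_square_on_le_tangent)
    have "?I < \<infinity>"
      using tangent[OF zero_less_one] by (rule le_less_trans) simp
    moreover have "enn2real ?I \<le> K powr (1 / p) * measure M B powr (1 - 1 / p)"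
    proof (rule le_powr_mult_powr_if_tangent_bounds[OF p K m])
      fix c :: real assume c: "0 < c"
      have "0 \<le> 1 - 1 / p" using p by simp
      then have "0 \<le> K / (p * c powr (p - 1)) + (1 - 1 / p) * c * measure M B"
        using p c K by (intro add_nonneg_nonneg mult_nonneg_nonneg divide_nonneg_nonneg) auto
      then show "enn2real ?I \<le> K / (p * c powr (p - 1)) + (1 - 1 / p) * c * measure M B"
        using tangent[OF c] by (rule enn2real_leI)
    qed
    ultimately show ?thesis
      unfolding norm by (intro enn2real_le) auto
  qed
qed

end

lemma (in prob_space) invariant_kernel_return: "invariant_kernel M (return M)"
  by unfold_locales (simp_all add: bind_return'')

context invariant_kernel
begin

lemma energy_density_le_power2:
  fixes f :: "'a \<Rightarrow> real"
  assumes x: "x \<in> space M" and f: "f \<in> borel_measurable M"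
  shows "energy_density T f x \<le> 2 * (\<integral>\<^sup>+y. ennreal ((f y)\<^sup>2) \<partial>T x) + 2 * ennreal ((f x)\<^sup>2)"
proof -
  interpret Tx: prob_space "T x" using x by (rule prob_space_kernel)
  have [measurable]: "f \<in> borel_measurable (T x)" using x f by (rule measurable_kernelI)
  have "energy_density T f x \<le> (\<integral>\<^sup>+y. 2 * ennreal ((f y)\<^sup>2) + 2 * ennreal ((f x)\<^sup>2) \<partial>T x)"
    unfolding energy_density_def
  proof (rule nn_integral_mono)
    fix y
    have "ennreal ((f y - f x)\<^sup>2) \<le> ennreal (2 * (f y)\<^sup>2 + 2 * (f x)\<^sup>2)"
      by (intro ennreal_leI power2_diff_le)
    then show "ennreal ((f y - f x)\<^sup>2) \<le> 2 * ennreal ((f y)\<^sup>2) + 2 * ennreal ((f x)\<^sup>2)"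
      by (simp add: ennreal_mult)
  qed
  also have "\<dots> = 2 * (\<integral>\<^sup>+y. ennreal ((f y)\<^sup>2) \<partial>T x) + 2 * ennreal ((f x)\<^sup>2)"
    by (simp add: nn_integral_add nn_integral_cmult Tx.emeasure_space_1)
  finally show ?thesis .
qed

lemma nn_integral_energy_density_on_le_lr_norm:
  fixes f :: "'a \<Rightarrow> real" and p :: real
  assumes p: "1 < p" and f[measurable]: "f \<in> borel_measurable M"
    and f_p: "integrable M (\<lambda>x. \<bar>f x\<bar> powr (2 * p))" and B[measurable]: "B \<in> sets M"
  shows "(\<integral>\<^sup>+x. energy_density T f x * indicator B x \<partial>M)
    \<le> ennreal (4 * ((lr_norm M (2 * p) f)\<^sup>2 * measure M B powr (1 - 1 / p)))"
proof -
  interpret id: invariant_kernel M "return M" by (rule invariant_kernel_return)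
  define b where "b = (lr_norm M (2 * p) f)\<^sup>2 * measure M B powr (1 - 1 / p)"
  define I where "I S x = (\<integral>\<^sup>+y. ennreal ((f y)\<^sup>2) \<partial>S x) * indicator B x" for S x
  have [measurable]: "(\<lambda>x. \<integral>\<^sup>+y. ennreal ((f y)\<^sup>2) \<partial>T x) \<in> borel_measurable M"
    "(\<lambda>x. \<integral>\<^sup>+y. ennreal ((f y)\<^sup>2) \<partial>return M x) \<in> borel_measurable M"
    by (intro measurable_nn_integral_kernel id.measurable_nn_integral_kernel; measurable)+
  then have [measurable]: "I T \<in> borel_measurable M" "I (return M) \<in> borel_measurable M"
    unfolding I_def by measurable
  have "(\<integral>\<^sup>+x. energy_density T f x * indicator B x \<partial>M)
      \<le> (\<integral>\<^sup>+x. 2 * I T x + 2 * I (return M) x \<partial>M)"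
  proof (intro nn_integral_mono)
    fix x assume x: "x \<in> space M"
    have "energy_density T f x
        \<le> 2 * (\<integral>\<^sup>+y. ennreal ((f y)\<^sup>2) \<partial>T x) + 2 * (\<integral>\<^sup>+y. ennreal ((f y)\<^sup>2) \<partial>return M x)"
      using energy_density_le_power2[OF x f] x by (simp add: nn_integral_return)
    then show "energy_density T f x * indicator B x \<le> 2 * I T x + 2 * I (return M) x"
      by (auto simp: I_def distrib_right mult.assoc split: split_indicator)
  qed
  also have "\<dots> = 2 * (\<integral>\<^sup>+x. I T x \<partial>M) + 2 * (\<integral>\<^sup>+x. I (return M) x \<partial>M)"
    by (simp add: nn_integral_add nn_integral_cmult)
  also have "\<dots> \<le> 2 * ennreal b + 2 * ennreal b"
    unfolding I_def b_def
    using nn_integral_kernel_square_on_le[OF p f f_p B] id.nn_integral_kernel_square_on_le[OF p f f_p B]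
    by (intro add_mono mult_left_mono) auto
  also have "\<dots> = ennreal (4 * b)"
    by (simp add: b_def ennreal_mult flip: distrib_right)
  finally show ?thesis by (simp add: b_def)
qed

lemma AE_energy_density_le_osc:
  fixes f :: "'a \<Rightarrow> real"
  assumes f[measurable]: "f \<in> borel_measurable M" and bounded: "AE x in M. \<bar>f x\<bar> \<le> C"
  shows "AE x in M. energy_density T f x \<le> ennreal ((osc_norm M f)\<^sup>2)"
proof -
  obtain a where a: "AE x in M. a \<le> f x \<and> f x \<le> a + osc_norm M f"
    using AE_in_osc_interval[OF f bounded] ..
  then have "AE x in M. AE y in T x. a \<le> f y \<and> f y \<le> a + osc_norm M f"
    by (intro AE_kernel_invariant) auto
  with a AE_space show ?thesis
  proof eventually_elim
    case (elim x)
    interpret Tx: prob_space "T x" using elim(2) by (rule prob_space_kernel)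
    have "energy_density T f x \<le> (\<integral>\<^sup>+y. ennreal ((osc_norm M f)\<^sup>2) \<partial>T x)"
      unfolding energy_density_def using elim(3)
    proof (rule nn_integral_mono_AE[OF AE_mp], intro AE_I2 impI)
      fix y assume "a \<le> f y \<and> f y \<le> a + osc_norm M f"
      with elim(1) have "\<bar>f y - f x\<bar> \<le> osc_norm M f" by auto
      moreover from this have "0 \<le> osc_norm M f" by (rule order_trans[OF abs_ge_zero])
      ultimately show "ennreal ((f y - f x)\<^sup>2) \<le> ennreal ((osc_norm M f)\<^sup>2)"
        by (simp add: ennreal_leI power2_le_iff_abs_le)
    qed
    then show ?case by (simp add: Tx.emeasure_space_1)
  qed
qed

lemma nn_integral_energy_density_on_le_osc:
  fixes f :: "'a \<Rightarrow> real"
  assumes f[measurable]: "f \<in> borel_measurable M" and bounded: "AE x in M. \<bar>f x\<bar> \<le> C"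
    and B[measurable]: "B \<in> sets M"
  shows "(\<integral>\<^sup>+x. energy_density T f x * indicator B x \<partial>M)
    \<le> ennreal ((osc_norm M f)\<^sup>2 * measure M B)"
proof -
  have "AE x in M. energy_density T f x \<le> ennreal ((osc_norm M f)\<^sup>2)"
    using f bounded by (rule AE_energy_density_le_osc)
  then have "AE x in M. energy_density T f x * indicator B x
      \<le> ennreal ((osc_norm M f)\<^sup>2) * indicator B x"
    by eventually_elim (rule mult_right_mono, simp_all)
  then have "(\<integral>\<^sup>+x. energy_density T f x * indicator B x \<partial>M)
      \<le> (\<integral>\<^sup>+x. ennreal ((osc_norm M f)\<^sup>2) * indicator B x \<partial>M)"
    by (rule nn_integral_mono_AE)
  also have "\<dots> = ennreal ((osc_norm M f)\<^sup>2 * measure M B)"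
    by (simp add: nn_integral_cmult_indicator emeasure_eq_measure ennreal_mult)
  finally show ?thesis .
qed

end

locale minorized_kernel = invariant_kernel M P for M :: "'a measure" and P +
  fixes \<epsilon> :: "'a \<Rightarrow> real"
  assumes eps_measurable[measurable]: "\<epsilon> \<in> borel_measurable M"
    and eps_nonneg: "\<And>x. x \<in> space M \<Longrightarrow> 0 \<le> \<epsilon> x"
    and minorization:
      "\<And>x A. x \<in> space M \<Longrightarrow> A \<in> sets M \<Longrightarrow> \<epsilon> x * indicator A x \<le> measure (P x) A"
begin

sublocale two_step: invariant_kernel M "ksq P"
proof
  show "ksq P \<in> M \<rightarrow>\<^sub>M prob_algebra M"
    unfolding ksq_def by (rule measurable_bind_prob_space[OF kernel kernel])
  show "M \<bind> ksq P = M"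
    unfolding ksq_def using bind_assoc[OF subprob_kernel subprob_kernel] bind_invariant by simp
qed

lemma nn_integral_ksq_ge:
  assumes x: "x \<in> space M" and G[measurable]: "G \<in> borel_measurable M"
  shows "ennreal (\<epsilon> x) * (\<integral>\<^sup>+y. G y \<partial>P x) \<le> (\<integral>\<^sup>+y. G y \<partial>ksq P x)"
proof -
  have "ennreal (\<epsilon> x) * (\<integral>\<^sup>+y. G y \<partial>P x) \<le> (\<integral>\<^sup>+z. \<integral>\<^sup>+y. G y \<partial>P z \<partial>P x)"
  proof (rule nn_integral_ge_point_minorant[where M=M])
    show "finite_measure (P x)"
      using prob_space_kernel[OF x] by (simp add: prob_space_def)
    show "(\<lambda>z. \<integral>\<^sup>+y. G y \<partial>P z) \<in> borel_measurable M"
      by (rule measurable_nn_integral_kernel[OF G])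
  qed (use x sets_kernel minorization in auto)
  also have "\<dots> = (\<integral>\<^sup>+y. G y \<partial>ksq P x)"
    unfolding ksq_def
    by (rule nn_integral_bind[symmetric, OF G measurable_kernelI[OF x subprob_kernel]])
  finally show ?thesis .
qed

lemma measure_ksq_ge:
  assumes x: "x \<in> space M" and A: "A \<in> sets M"
  shows "\<epsilon> x * measure (P x) A \<le> measure (ksq P x) A"
proof -
  interpret Px: prob_space "P x" using x by (rule prob_space_kernel)
  interpret P2x: prob_space "ksq P x" using x by (rule two_step.prob_space_kernel)
  have "ennreal (\<epsilon> x) * (\<integral>\<^sup>+y. indicator A y \<partial>P x)
      \<le> (\<integral>\<^sup>+y. indicator A y \<partial>ksq P x)"
    using x A by (intro nn_integral_ksq_ge) auto
  then have "ennreal (\<epsilon> x * measure (P x) A) \<le> ennreal (measure (ksq P x) A)"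
    using A sets_kernel[OF x] two_step.sets_kernel[OF x] eps_nonneg[OF x]
    by (simp add: Px.emeasure_eq_measure P2x.emeasure_eq_measure ennreal_mult)
  then show ?thesis by simp
qed

lemma dirichlet_le_ksq_plus_energy_on:
  fixes f :: "'a \<Rightarrow> real" and s r :: real
  assumes f[measurable]: "f \<in> borel_measurable M" and f2: "integrable M (\<lambda>x. (f x)\<^sup>2)"
    and s: "0 < s" and r: "0 \<le> r"
    and energy_on: "(\<integral>\<^sup>+x. energy_density P f x
      * indicator {x\<in>space M. \<epsilon> x = 0 \<or> s \<le> inverse (\<epsilon> x)} x \<partial>M) \<le> ennreal r"
  shows "dirichlet M P f \<le> s * dirichlet M (ksq P) f + r / 2"
proof -
  define B where "B = {x\<in>space M. \<epsilon> x = 0 \<or> s \<le> inverse (\<epsilon> x)}"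
  have [measurable]: "B \<in> sets M" unfolding B_def by measurable
  note [measurable] = measurable_energy_density[OF f] two_step.measurable_energy_density[OF f]
  have off_B:
    "energy_density P f x * indicator (space M - B) x \<le> ennreal s * energy_density (ksq P) f x"
    if x: "x \<in> space M" for x
  proof (cases "x \<in> B")
    case False
    with x eps_nonneg[OF x] have "0 < \<epsilon> x" "inverse (\<epsilon> x) < s"
      by (auto simp: B_def)
    then have "1 \<le> s * \<epsilon> x" by (simp add: field_simps)
    then have "energy_density P f x \<le> ennreal s * (ennreal (\<epsilon> x) * energy_density P f x)"
      using s \<open>0 < \<epsilon> x\<close> mult_right_mono[of 1 "ennreal (s * \<epsilon> x)" "energy_density P f x"]
      by (simp add: ennreal_mult mult.assoc ennreal_le_iff[symmetric])
    also have "\<dots> \<le> ennreal s * energy_density (ksq P) f x"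
      unfolding energy_density_def by (intro mult_left_mono nn_integral_ksq_ge x) auto
    finally show ?thesis using False x by simp
  qed simp
  have "ennreal (2 * dirichlet M P f) = (\<integral>\<^sup>+x. energy_density P f x \<partial>M)"
    using f f2 by (rule nn_integral_energy_density(1)[symmetric])
  also have "\<dots> = (\<integral>\<^sup>+x. energy_density P f x * indicator (space M - B) x \<partial>M)
      + (\<integral>\<^sup>+x. energy_density P f x * indicator B x \<partial>M)"
    by (subst nn_integral_add[symmetric]) (auto intro!: nn_integral_cong split: split_indicator)
  also have "\<dots> \<le> ennreal s * (\<integral>\<^sup>+x. energy_density (ksq P) f x \<partial>M) + ennreal r"
    using energy_on off_B unfolding B_def[symmetric]
    by (intro add_mono) (auto simp: nn_integral_cmult[symmetric] intro!: nn_integral_mono)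
  also have "\<dots> = ennreal (2 * s * dirichlet M (ksq P) f + r)"
    using s r two_step.nn_integral_energy_density[OF f f2]
    by (simp add: ennreal_mult[symmetric] mult.left_commute)
  finally have "2 * dirichlet M P f \<le> 2 * s * dirichlet M (ksq P) f + r"
    using s r two_step.nn_integral_energy_density(2)[OF f f2] by (subst (asm) ennreal_le_iff) auto
  then show ?thesis by simp
qed

lemma dirichlet_le_lr_norm:
  fixes f :: "'a \<Rightarrow> real" and p s :: real
  assumes p: "1 < p" and f[measurable]: "f \<in> borel_measurable M"
    and f_p: "integrable M (\<lambda>x. \<bar>f x\<bar> powr (2 * p))" and s: "0 < s"
  shows "dirichlet M P f \<le> s * dirichlet M (ksq P) f
    + measure M {x\<in>space M. \<epsilon> x = 0 \<or> s \<le> inverse (\<epsilon> x)} powr (1 - 1 / p)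
      * (4 * (lr_norm M (2 * p) f)\<^sup>2)"
proof -
  define B where "B = {x\<in>space M. \<epsilon> x = 0 \<or> s \<le> inverse (\<epsilon> x)}"
  define r where "r = 4 * ((lr_norm M (2 * p) f)\<^sup>2 * measure M B powr (1 - 1 / p))"
  have "B \<in> sets M" unfolding B_def by measurable
  have r: "0 \<le> r" by (simp add: r_def)
  have "integrable M (\<lambda>x. (f x)\<^sup>2)"
    using p f_p by (intro integrable_power2_if_integrable_powr) auto
  moreover have "(\<integral>\<^sup>+x. energy_density P f x * indicator B x \<partial>M) \<le> ennreal r"
    unfolding r_def using p f f_p \<open>B \<in> sets M\<close> by (rule nn_integral_energy_density_on_le_lr_norm)
  ultimately have "dirichlet M P f \<le> s * dirichlet M (ksq P) f + r / 2"
    using f s r unfolding B_def by (intro dirichlet_le_ksq_plus_energy_on)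
  moreover have "r / 2 \<le> measure M B powr (1 - 1 / p) * (4 * (lr_norm M (2 * p) f)\<^sup>2)"
    using r unfolding r_def by simp
  ultimately show ?thesis unfolding B_def by linarith
qed

lemma dirichlet_le_osc_norm:
  fixes f :: "'a \<Rightarrow> real" and s C :: real
  assumes f[measurable]: "f \<in> borel_measurable M" and bounded: "AE x in M. \<bar>f x\<bar> \<le> C"
    and s: "0 < s"
  shows "dirichlet M P f \<le> s * dirichlet M (ksq P) f
    + measure M {x\<in>space M. \<epsilon> x = 0 \<or> s \<le> inverse (\<epsilon> x)} * (osc_norm M f)\<^sup>2"
proof -
  define B where "B = {x\<in>space M. \<epsilon> x = 0 \<or> s \<le> inverse (\<epsilon> x)}"
  define r where "r = (osc_norm M f)\<^sup>2 * measure M B"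
  have "B \<in> sets M" unfolding B_def by measurable
  have r: "0 \<le> r" by (simp add: r_def)
  have "integrable M (\<lambda>x. (f x)\<^sup>2)"
  proof (rule integrable_const_bound)
    show "AE x in M. norm ((f x)\<^sup>2) \<le> C\<^sup>2"
      using bounded
    proof eventually_elim
      case (elim x)
      then have "0 \<le> C" by (rule order_trans[OF abs_ge_zero])
      with elim show ?case by (simp add: power2_le_iff_abs_le)
    qed
  qed measurable
  moreover have "(\<integral>\<^sup>+x. energy_density P f x * indicator B x \<partial>M) \<le> ennreal r"
    unfolding r_def using f bounded \<open>B \<in> sets M\<close> by (rule nn_integral_energy_density_on_le_osc)
  ultimately have "dirichlet M P f \<le> s * dirichlet M (ksq P) f + r / 2"
    using f s r unfolding B_def by (intro dirichlet_le_ksq_plus_energy_on)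
  moreover have "r / 2 \<le> measure M B * (osc_norm M f)\<^sup>2"
    using r unfolding r_def by simp
  ultimately show ?thesis unfolding B_def by linarith
qed

end

theorem theorem38:
  fixes M :: "'a measure" and P :: "'a \<Rightarrow> 'a measure" and \<epsilon> :: "'a \<Rightarrow> real"
  assumes "prob_space M"
    and kernel: "P \<in> M \<rightarrow>\<^sub>M prob_algebra M"
    and invariant: "\<forall>A\<in>sets M. (\<integral>x. measure (P x) A \<partial>M) = measure M A"
    and eps_meas: "\<epsilon> \<in> borel_measurable M"
    and eps_range: "\<forall>x\<in>space M. 0 \<le> \<epsilon> x \<and> \<epsilon> x \<le> 1"
    and minor: "\<forall>x\<in>space M. \<forall>A\<in>sets M. measure (P x) A \<ge> \<epsilon> x * indicator A x"
  shows "(\<forall>x\<in>space M. \<forall>A\<in>sets M. measure (ksq P x) A \<ge> \<epsilon> x * measure (P x) A)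
    \<and> (\<forall>p::real. \<forall>f::'a \<Rightarrow> real. \<forall>s::real.
          1 < p \<and> f \<in> borel_measurable M \<and> integrable M (\<lambda>x. \<bar>f x\<bar> powr (2 * p))
          \<and> (\<integral>x. f x \<partial>M) = 0 \<and> 0 < s \<longrightarrow>
          dirichlet M P f \<le> s * dirichlet M (ksq P) f
            + measure M {x\<in>space M. \<epsilon> x = 0 \<or> s \<le> inverse (\<epsilon> x)} powr (1 - 1 / p)
              * (4 * (lr_norm M (2 * p) f)\<^sup>2))
    \<and> (\<forall>f::'a \<Rightarrow> real. \<forall>s::real.
          f \<in> borel_measurable M \<and> (\<exists>C. AE x in M. \<bar>f x\<bar> \<le> C)
          \<and> (\<integral>x. f x \<partial>M) = 0 \<and> 0 < s \<longrightarrow>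
          dirichlet M P f \<le> s * dirichlet M (ksq P) f
            + measure M {x\<in>space M. \<epsilon> x = 0 \<or> s \<le> inverse (\<epsilon> x)}
              * (osc_norm M f)\<^sup>2)"
proof -
  interpret prob_space M by fact
  interpret minorized_kernel M P \<epsilon>
    using kernel bind_eq_if_invariant[OF kernel invariant] eps_meas eps_range minor
    by unfold_locales auto
  show ?thesis
    using measure_ksq_ge dirichlet_le_lr_norm dirichlet_le_osc_norm by blast
qed

end
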